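(* The function $\check J$ is coercive on $\mathcal M_T$: $\check J(\Sigma_{\rho_0},\dots,\Sigma_{\rho_{T-1}})\to\infty$ as $\|\Sigma_{\rho_k}\|\to\infty$ for any $k\in\{0,\dots,T-1\}$.
   Context: Fix integers $n,m,T\ge 1$, a scalar $\varepsilon>0$, matrices $A_k\in\mathbb R^{n\times n}$, $B_k\in\mathbb R^{n\times m}$ ($k=0,\dots,T-1$), and symmetric positive definite matrices $R_k\in\mathbb R^{m\times m}$, $\Sigma_{w_k}\in\mathbb R^{n\times n}$ ($k=0,\dots,T-1$), $F,\Sigma_{x_{\mathrm{ini}}}\in\mathbb R^{n\times n}$. Let $\mathcal M_T=(\mathbb S^m_{\succeq 0})^T$ with $\mathbb S^m_{\succeq0}$ the symmetric PSD $m\times m$ matrices; $\|\cdot\|$ the Frobenius norm; $\Sigma^{1/2}$ the PSD square root, $|\cdot|$ the determinant. For $(\Sigma_{\rho_0},\dots,\Sigma_{\rho_{T-1}})\in\mathcal M_T$ define backwards $\Pi_T=F$, $C_k=(R_k+B_k^\top\Pi_{k+1}B_k)/\varepsilon$, $\Pi_k=A_k^\top\Pi_{k+1}A_k-\frac1\varepsilon A_k^\top\Pi_{k+1}B_k\Sigma_{\rho_k}^{1/2}(I+\Sigma_{\rho_k}^{1/2}C_k\Sigma_{\rho_k}^{1/2})^{-1}\Sigma_{\rho_k}^{1/2}B_k^\top\Pi_{k+1}A_k$, $\Sigma_{Q_k}=\varepsilon(R_k+B_k^\top\Pi_{k+1}B_k)^{-1}$, and $\check J(\Sigma_{\rho_0},\dots,\Sigma_{\rho_{T-1}})=\frac12\Big[\mathrm{Tr}(\Pi_0\Sigma_{x_{\mathrm{ini}}})+\sum_{k=0}^{T-1}\Big(\varepsilon\log\frac{|\Sigma_{\rho_k}+\Sigma_{Q_k}|}{|\Sigma_{Q_k}|}+\mathrm{Tr}(\Pi_{k+1}\Sigma_{w_k})\Big)\Big]$.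 *)

theory Defs
  imports "HOL-Analysis.Analysis"
begin

definition psd :: "real^'m^'m \<Rightarrow> bool" where
  "psd S \<longleftrightarrow> transpose S = S \<and> (\<forall>x. 0 \<le> x \<bullet> (S *v x))"

definition posdef :: "real^'m^'m \<Rightarrow> bool" where
  "posdef S \<longleftrightarrow> transpose S = S \<and> (\<forall>x. x \<noteq> 0 \<longrightarrow> 0 < x \<bullet> (S *v x))"

definition psd_sqrt :: "real^'m^'m \<Rightarrow> real^'m^'m" where
  "psd_sqrt S = (THE X. psd X \<and> X ** X = S)"

definition Pi_step ::
  "real \<Rightarrow> real^'n^'n \<Rightarrow> real^'m^'n \<Rightarrow> real^'m^'m \<Rightarrow> real^'m^'m \<Rightarrow> real^'n^'n \<Rightarrow> real^'n^'n" where
  "Pi_step eps Ak Bk Rk Srho P =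
     (let C = (1/eps) *\<^sub>R (Rk + transpose Bk ** P ** Bk);
          S = psd_sqrt Srho
      in transpose Ak ** P ** Ak
         - (1/eps) *\<^sub>R (transpose Ak ** P ** Bk ** S ** matrix_inv (mat 1 + S ** C ** S)
                          ** S ** transpose Bk ** P ** Ak))"

text \<open>Auxiliary: Pi_aux j = Pi_{T-j} (j backward steps from Pi_T = F).\<close>
fun Pi_aux ::
  "nat \<Rightarrow> real \<Rightarrow> (nat \<Rightarrow> real^'n^'n) \<Rightarrow> (nat \<Rightarrow> real^'m^'n) \<Rightarrow> (nat \<Rightarrow> real^'m^'m)
    \<Rightarrow> real^'n^'n \<Rightarrow> (nat \<Rightarrow> real^'m^'m) \<Rightarrow> nat \<Rightarrow> real^'n^'n" where
  "Pi_aux T eps A B R F Srho 0 = F"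
| "Pi_aux T eps A B R F Srho (Suc j) =
     Pi_step eps (A (T - Suc j)) (B (T - Suc j)) (R (T - Suc j)) (Srho (T - Suc j))
             (Pi_aux T eps A B R F Srho j)"

definition Pi_mat ::
  "nat \<Rightarrow> real \<Rightarrow> (nat \<Rightarrow> real^'n^'n) \<Rightarrow> (nat \<Rightarrow> real^'m^'n) \<Rightarrow> (nat \<Rightarrow> real^'m^'m)
    \<Rightarrow> real^'n^'n \<Rightarrow> (nat \<Rightarrow> real^'m^'m) \<Rightarrow> nat \<Rightarrow> real^'n^'n" where
  "Pi_mat T eps A B R F Srho k = Pi_aux T eps A B R F Srho (T - k)"

definition Sigma_Q ::
  "nat \<Rightarrow> real \<Rightarrow> (nat \<Rightarrow> real^'n^'n) \<Rightarrow> (nat \<Rightarrow> real^'m^'n) \<Rightarrow> (nat \<Rightarrow> real^'m^'m)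
    \<Rightarrow> real^'n^'n \<Rightarrow> (nat \<Rightarrow> real^'m^'m) \<Rightarrow> nat \<Rightarrow> real^'m^'m" where
  "Sigma_Q T eps A B R F Srho k =
     eps *\<^sub>R matrix_inv (R k + transpose (B k) ** Pi_mat T eps A B R F Srho (Suc k) ** B k)"

definition J_check ::
  "nat \<Rightarrow> real \<Rightarrow> (nat \<Rightarrow> real^'n^'n) \<Rightarrow> (nat \<Rightarrow> real^'m^'n) \<Rightarrow> (nat \<Rightarrow> real^'m^'m)
    \<Rightarrow> (nat \<Rightarrow> real^'n^'n) \<Rightarrow> real^'n^'n \<Rightarrow> real^'n^'n \<Rightarrow> (nat \<Rightarrow> real^'m^'m) \<Rightarrow> real" where
  "J_check T eps A B R Sw F Sx Srho =
     (1/2) * (trace (Pi_mat T eps A B R F Srho 0 ** Sx)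
       + (\<Sum>k<T. eps * ln (det (Srho k + Sigma_Q T eps A B R F Srho k)
                            / det (Sigma_Q T eps A B R F Srho k))
                 + trace (Pi_mat T eps A B R F Srho (Suc k) ** Sw k)))"

end

theory Submission
  imports Defs
begin

(* Every Pi_k is positive semidefinite: with S = Sigma_rho_k^(1/2) and W = I + S C_k S, a step of
   the recursion is the congruence A_k^T M A_k of M = P - (1/eps) P B_k S W^-1 S B_k^T P, and the
   quadratic form of M is a sum of two nonnegative terms. Hence all trace terms of J are
   nonnegative, and N_k = R_k + B_k^T Pi_(k+1) B_k dominates c I for a c > 0 depending only on
   the R_k. As Sigma_Q_k = eps N_k^-1, the k-th logarithm equals log det (I + Y Sigma_rho_k Y / eps)
   with Y = N_k^(1/2), which is at least log (1 + c tr Sigma_rho_k / eps). Finally the Frobenius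
   norm of a PSD m x m matrix is at most m times its trace, so
   J >= (eps/2) log (1 + c |Sigma_rho_k| / (m eps)), which is unbounded. *)

lemma transpose_add: "transpose ((A::'a::semiring_1^'n^'m) + B) = transpose A + transpose B"
  by (simp add: transpose_def vec_eq_iff)

lemma transpose_diff: "transpose ((A::'a::ring_1^'n^'m) - B) = transpose A - transpose B"
  by (simp add: transpose_def vec_eq_iff)

lemma matrix_add_rdistrib: "((A::'a::semiring_1^'n^'m) + B) ** C = A ** C + B ** C"
  by (simp add: matrix_matrix_mult_def vec_eq_iff sum.distrib algebra_simps)

lemma matrix_diff_ldistrib: "(A::'a::ring_1^'n^'m) ** (B - C) = A ** B - A ** C"
  by (simp add: matrix_matrix_mult_def vec_eq_iff sum_subtractf algebra_simps)

lemma matrix_diff_rdistrib: "((A::'a::ring_1^'n^'m) - B) ** C = A ** C - B ** C"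
  by (simp add: matrix_matrix_mult_def vec_eq_iff sum_subtractf algebra_simps)

lemma inner_mult_transpose_vector:
  fixes B :: "real^'m^'n"
  shows "x \<bullet> (transpose B *v y) = (B *v x) \<bullet> y"
  by (metis dot_lmul_matrix inner_commute transpose_matrix_vector)

lemma symmetric_inner_mult_vector:
  fixes A :: "real^'n^'n"
  assumes "transpose A = A"
  shows "x \<bullet> (A *v y) = (A *v x) \<bullet> y"
  using inner_mult_transpose_vector[of x A y] assms by simp

lemma inner_mult_vector_scaleR:
  fixes A :: "real^'n^'n"
  shows "(c *\<^sub>R x) \<bullet> (A *v (c *\<^sub>R x)) = c\<^sup>2 * (x \<bullet> (A *v x))"
  by (simp add: matrix_vector_mult_scaleR power2_eq_square)

lemma matrix_component_eq_inner: "(M::real^'n^'m) $ i $ j = axis i 1 \<bullet> (M *v axis j 1)"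
  by (simp add: inner_axis' matrix_vector_mul_component inner_axis)

lemma trace_scaleR: "trace (k *\<^sub>R (A::real^'n^'n)) = k * trace A"
  by (simp add: trace_def sum_distrib_left)

section \<open>Symmetric matrices and the spectral theorem\<close>

lemma linear_coeff_eq_0_if_quadratic_nonneg:
  fixes a b :: real
  assumes "\<And>t. 0 \<le> a * t + b * t\<^sup>2"
  shows "a = 0"
proof (rule ccontr)
  assume "a \<noteq> 0"
  define s where "s = \<bar>b\<bar> + 1"
  have s: "s > 0" "b / s < 1" by (simp_all add: s_def)
  have "a * (- a / s) + b * (- a / s)\<^sup>2 = a\<^sup>2 / s * (b / s - 1)"
    using s by (simp add: power2_eq_square field_simps)
  also have "\<dots> < 0"
    using \<open>a \<noteq> 0\<close> s by (intro mult_pos_neg) auto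
  finally show False using assms[of "- a / s"] by simp
qed

lemma symmetric_form_zero_imp_orthogonal:
  fixes B :: "real^'n^'n"
  assumes sym: "transpose B = B" and V: "subspace V"
    and nonneg: "\<And>y. y \<in> V \<Longrightarrow> 0 \<le> y \<bullet> (B *v y)"
    and v: "v \<in> V" "v \<bullet> (B *v v) = 0" and w: "w \<in> V"
  shows "(B *v v) \<bullet> w = 0"
proof -
  have "2 * ((B *v v) \<bullet> w) = 0"
  proof (rule linear_coeff_eq_0_if_quadratic_nonneg)
    fix t :: real
    have "(v + t *\<^sub>R w) \<bullet> (B *v (v + t *\<^sub>R w)) = 2 * ((B *v v) \<bullet> w) * t + (w \<bullet> (B *v w)) * t\<^sup>2"
      using v(2) symmetric_inner_mult_vector[OF sym, of v w]
      by (simp add: matrix_vector_right_distrib matrix_vector_mult_scaleR inner_add_left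
          inner_add_right inner_commute power2_eq_square algebra_simps)
    moreover have "v + t *\<^sub>R w \<in> V" using V v w by (simp add: subspace_add subspace_scale)
    ultimately show "0 \<le> 2 * ((B *v v) \<bullet> w) * t + (w \<bullet> (B *v w)) * t\<^sup>2"
      using nonneg by metis
  qed
  then show ?thesis by simp
qed

text \<open>A maximiser \<open>v\<close> of the Rayleigh quotient on the unit sphere of \<open>V\<close> is an eigenvector:
  for its value \<open>l\<close>, the form of \<open>l I - A\<close> is nonnegative on \<open>V\<close> and vanishes at \<open>v\<close>.\<close>
lemma symmetric_eigenvector_in_invariant_subspace:
  fixes A :: "real^'n^'n"
  assumes sym: "transpose A = A" and V: "subspace V"
    and inv: "\<And>x. x \<in> V \<Longrightarrow> A *v x \<in> V" and x: "x \<in> V" "x \<noteq> 0"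
  obtains v where "v \<in> V" "norm v = 1" "A *v v = (v \<bullet> (A *v v)) *\<^sub>R v"
proof -
  let ?K = "V \<inter> sphere 0 1"
  let ?f = "\<lambda>v. v \<bullet> (A *v v)"
  have "compact ?K"
    by (simp add: V closed_subspace compact_Int_closed compact_sphere inf_commute closed_Int_compact)
  moreover have "x /\<^sub>R norm x \<in> ?K" using x V by (simp add: subspace_scale)
  moreover have "continuous_on ?K ?f"
    by (intro continuous_intros linear_continuous_on matrix_vector_mul_bounded_linear)
  ultimately obtain v where v: "v \<in> ?K" and max: "\<And>y. y \<in> ?K \<Longrightarrow> ?f y \<le> ?f v"
    using continuous_attains_sup[of ?K ?f] by blast
  define B where "B = ?f v *\<^sub>R mat 1 - A"
  have symB: "transpose B = B" by (simp add: B_def transpose_diff transpose_scalar sym)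
  have Bv: "B *v y = ?f v *\<^sub>R y - A *v y" for y
    by (simp add: B_def matrix_vector_mult_diff_rdistrib scaleR_matrix_vector_assoc[symmetric])
  have "0 \<le> y \<bullet> (B *v y)" if "y \<in> V" for y
  proof (cases "y = 0")
    case False
    then have "y /\<^sub>R norm y \<in> ?K" using that V by (simp add: subspace_scale)
    then have "?f (y /\<^sub>R norm y) \<le> ?f v" using max by blast
    moreover have "?f (y /\<^sub>R norm y) = ?f y / (norm y)\<^sup>2"
      using inner_mult_vector_scaleR[of "inverse (norm y)" y A]
      by (simp add: power_inverse divide_inverse_commute)
    ultimately have "?f y / (norm y)\<^sup>2 \<le> ?f v" by simp
    then have "?f y \<le> ?f v * (y \<bullet> y)"
      using False by (simp add: divide_le_eq dot_square_norm)
    then show ?thesis by (simp add: Bv inner_diff_right)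
  qed simp
  moreover have "v \<bullet> (B *v v) = 0" using v by (simp add: Bv inner_diff_right norm_eq_1)
  moreover have "B *v v \<in> V" using v inv V by (simp add: Bv subspace_diff subspace_scale)
  ultimately have "(B *v v) \<bullet> (B *v v) = 0"
    using symmetric_form_zero_imp_orthogonal[OF symB V] v by blast
  then have "A *v v = ?f v *\<^sub>R v" by (simp add: Bv)
  with v show thesis by (intro that) auto
qed

definition diag_mat :: "('n \<Rightarrow> real) \<Rightarrow> real^'n^'n" where
  "diag_mat d = (\<chi> i j. if i = j then d i else 0)"

lemma diag_mat_mult_vector_component [simp]: "(diag_mat d *v x) $ i = d i * x $ i"
  by (simp add: diag_mat_def matrix_vector_mult_def if_distrib if_distribR cong: if_cong)

lemma matrix_mult_diag_mat_component [simp]: "(M ** diag_mat d) $ i $ j = M $ i $ j * d j"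
  by (simp add: diag_mat_def matrix_matrix_mult_def if_distrib if_distribR cong: if_cong)

lemma diag_mat_mult_diag_mat: "diag_mat d ** diag_mat e = diag_mat (\<lambda>i. d i * e i)"
  by (simp add: vec_eq_iff) (simp add: diag_mat_def)

lemma transpose_diag_mat [simp]: "transpose (diag_mat d) = diag_mat d"
  by (simp add: vec_eq_iff transpose_def diag_mat_def)

lemma diag_mat_add: "diag_mat d + diag_mat e = diag_mat (\<lambda>i. d i + e i)"
  by (simp add: vec_eq_iff diag_mat_def)

lemma mat_eq_diag_mat: "mat c = diag_mat (\<lambda>_. c)"
  by (simp add: vec_eq_iff diag_mat_def mat_def)

lemma det_diag_mat: "det (diag_mat d) = (\<Prod>i\<in>UNIV. d i)"
  by (subst det_diagonal) (simp_all add: diag_mat_def)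

lemma trace_diag_mat: "trace (diag_mat d) = (\<Sum>i\<in>UNIV. d i)"
  by (simp add: trace_def diag_mat_def)

lemma orthonormal_eigenvectors_exist:
  fixes A :: "real^'n^'n"
  assumes sym: "transpose A = A" and "k \<le> CARD('n)"
  shows "\<exists>S. finite S \<and> card S = k \<and> pairwise orthogonal S \<and>
           (\<forall>s\<in>S. norm s = 1 \<and> A *v s = (s \<bullet> (A *v s)) *\<^sub>R s)"
  using \<open>k \<le> CARD('n)\<close>
proof (induction k)
  case 0
  show ?case by (intro exI[of _ "{}"]) simp
next
  case (Suc k)
  then obtain S where S: "finite S" "card S = k" "pairwise orthogonal S"
    and eig: "\<And>s. s \<in> S \<Longrightarrow> norm s = 1 \<and> A *v s = (s \<bullet> (A *v s)) *\<^sub>R s"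
    by auto
  let ?V = "{y. \<forall>s\<in>S. orthogonal s y}"
  have "dim S < DIM(real^'n)" using dim_le_card'[OF S(1)] S(2) Suc.prems by simp
  then obtain x where x: "x \<noteq> 0" "\<And>y. y \<in> span S \<Longrightarrow> orthogonal x y"
    using orthogonal_to_subspace_exists by blast
  have "x \<in> ?V" using x(2) span_base by (auto simp: orthogonal_commute)
  moreover have "A *v y \<in> ?V" if "y \<in> ?V" for y
  proof -
    have "s \<bullet> (A *v y) = (s \<bullet> (A *v s)) * (s \<bullet> y)" if "s \<in> S" for s
      using symmetric_inner_mult_vector[OF sym, of s y] eig[OF that] by (metis inner_scaleR_left)
    then show ?thesis using that by (simp add: orthogonal_def)
  qed
  ultimately obtain v where v: "v \<in> ?V" "norm v = 1" "A *v v = (v \<bullet> (A *v v)) *\<^sub>R v"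
    using symmetric_eigenvector_in_invariant_subspace[OF sym subspace_orthogonal_to_vectors] x(1)
    by blast
  have "v \<notin> S" using v(1,2) by (auto simp: orthogonal_def norm_eq_1)
  then show ?case
    using S eig v by (intro exI[of _ "insert v S"]) (auto simp: pairwise_insert orthogonal_commute)
qed

theorem symmetric_matrix_diagonalization:
  fixes A :: "real^'n^'n"
  assumes sym: "transpose A = A"
  obtains U d where "orthogonal_matrix U" "A = U ** diag_mat d ** transpose U"
proof -
  obtain S where S: "finite S" "card S = CARD('n)" "pairwise orthogonal S"
    and eig: "\<And>s. s \<in> S \<Longrightarrow> norm s = 1 \<and> A *v s = (s \<bullet> (A *v s)) *\<^sub>R s"
    using orthonormal_eigenvectors_exist[OF sym order_refl] by blast
  obtain e where e: "bij_betw e (UNIV::'n set) S"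
    using finite_same_card_bij[of "UNIV::'n set" S] S(1,2) by auto
  define U :: "real^'n^'n" where "U = (\<chi> i j. e j $ i)"
  define d where "d j = e j \<bullet> (A *v e j)" for j
  have col: "column j U = e j" for j by (simp add: column_def U_def vec_eq_iff)
  have eS: "e j \<in> S" for j using e bij_betwE by blast
  have "orthogonal (e i) (e j)" if "i \<noteq> j" for i j
  proof -
    have "e i \<noteq> e j" using e that by (auto simp: bij_betw_def dest: injD)
    then show ?thesis using S(3) eS by (blast intro: pairwiseD)
  qed
  moreover have "norm (e j) = 1" for j using eig[OF eS] by blast
  ultimately have "orthogonal_matrix U"
    unfolding orthogonal_matrix_orthonormal_columns col by blast
  moreover have "A ** U = U ** diag_mat d"
  proof -
    have "(A ** U) $ i $ j = (A *v e j) $ i" for i j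
      by (simp add: matrix_matrix_mult_def matrix_vector_mult_def U_def)
    then show ?thesis using eig[OF eS] by (simp add: vec_eq_iff d_def U_def)
  qed
  ultimately have "A = U ** diag_mat d ** transpose U"
    by (metis matrix_mul_assoc matrix_mul_rid orthogonal_matrix_def)
  with \<open>orthogonal_matrix U\<close> show thesis by (rule that)
qed

lemma orthogonal_conj_diag_mat_column:
  fixes U :: "real^'n^'n"
  assumes "orthogonal_matrix U"
  shows "(U ** diag_mat d ** transpose U) *v column j U = d j *\<^sub>R column j U"
proof -
  have "transpose U *v column j U = axis j 1"
    using assms by (simp only: orthogonal_matrix matrix_vector_mult_basis[symmetric]
        matrix_vector_mul_assoc matrix_vector_mul_lid)
  then have "(U ** diag_mat d ** transpose U) *v column j U = U *v (diag_mat d *v axis j 1)"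
    by (simp only: matrix_vector_mul_assoc[symmetric])
  also have "diag_mat d *v axis j 1 = d j *\<^sub>R axis j 1"
    by (simp add: vec_eq_iff axis_def)
  finally show ?thesis by (simp add: matrix_vector_mult_scaleR matrix_vector_mult_basis)
qed

lemma orthogonal_conj_diag_mat_form_column:
  fixes U :: "real^'n^'n"
  assumes "orthogonal_matrix U"
  shows "column j U \<bullet> ((U ** diag_mat d ** transpose U) *v column j U) = d j"
  using assms by (simp add: orthogonal_conj_diag_mat_column orthogonal_matrix_orthonormal_columns
      dot_square_norm)

section \<open>Positive semidefinite matrices\<close>

lemma psd_transpose: "psd S \<Longrightarrow> transpose S = S"
  by (simp add: psd_def)

lemma psd_inner_nonneg: "psd S \<Longrightarrow> 0 \<le> x \<bullet> (S *v x)"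
  by (simp add: psd_def)

lemma posdef_imp_psd: "posdef S \<Longrightarrow> psd S"
  unfolding posdef_def psd_def by (metis inner_zero_left matrix_vector_mult_0_right order_refl less_imp_le)

lemma psd_add: "psd A \<Longrightarrow> psd B \<Longrightarrow> psd (A + B)"
  by (simp add: psd_def transpose_add matrix_vector_mult_add_rdistrib inner_add_right)

lemma psd_scaleR: "psd A \<Longrightarrow> 0 \<le> k \<Longrightarrow> psd (k *\<^sub>R A)"
  by (simp add: psd_def transpose_scalar scaleR_matrix_vector_assoc[symmetric])

lemma psd_congruence:
  fixes M :: "real^'n^'n" and A :: "real^'k^'n"
  assumes "psd M"
  shows "psd (transpose A ** M ** A)"
  unfolding psd_def
proof (intro conjI allI)
  show "transpose (transpose A ** M ** A) = transpose A ** M ** A"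
    using psd_transpose[OF assms] by (simp add: matrix_transpose_mul matrix_mul_assoc)
  have "x \<bullet> ((transpose A ** M ** A) *v x) = (A *v x) \<bullet> (M *v (A *v x))" for x
  proof -
    have "(transpose A ** M ** A) *v x = transpose A *v (M *v (A *v x))"
      by (simp only: matrix_vector_mul_assoc matrix_mul_assoc)
    then show ?thesis by (simp only: inner_mult_transpose_vector)
  qed
  then show "0 \<le> x \<bullet> ((transpose A ** M ** A) *v x)" for x
    using psd_inner_nonneg[OF assms] by simp
qed

lemma psd_orthogonal_conj_diag_mat:
  fixes U :: "real^'n^'n"
  assumes "\<And>j. 0 \<le> d j"
  shows "psd (U ** diag_mat d ** transpose U)"
proof -
  have "x \<bullet> (diag_mat d *v x) = (\<Sum>i\<in>UNIV. d i * (x $ i)\<^sup>2)" for x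
    by (simp add: inner_vec_def power2_eq_square mult_ac)
  then have "psd (diag_mat d)"
    using assms by (simp add: psd_def sum_nonneg)
  then show ?thesis using psd_congruence[of _ "transpose U"] by simp
qed

lemma psd_diagonalization:
  fixes A :: "real^'n^'n"
  assumes "psd A"
  obtains U d where "orthogonal_matrix U" "\<And>j. 0 \<le> d j" "A = U ** diag_mat d ** transpose U"
proof -
  obtain U d where U: "orthogonal_matrix U" and A: "A = U ** diag_mat d ** transpose U"
    using symmetric_matrix_diagonalization[OF psd_transpose[OF assms]] .
  have "0 \<le> d j" for j
    using psd_inner_nonneg[OF assms, of "column j U"] orthogonal_conj_diag_mat_form_column[OF U]
    by (simp add: A)
  then show thesis by (rule that[OF U _ A])
qed

lemma psd_sqrt_exists:
  fixes A :: "real^'n^'n"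
  assumes "psd A"
  shows "\<exists>Y. psd Y \<and> Y ** Y = A"
proof -
  obtain U d where U: "orthogonal_matrix U" and d: "\<And>j. 0 \<le> d j"
    and A: "A = U ** diag_mat d ** transpose U"
    using psd_diagonalization[OF assms] by blast
  define Y where "Y = U ** diag_mat (\<lambda>j. sqrt (d j)) ** transpose U"
  have "Y ** Y = U ** (diag_mat (\<lambda>j. sqrt (d j)) ** (transpose U ** U)
      ** diag_mat (\<lambda>j. sqrt (d j))) ** transpose U"
    by (simp add: Y_def matrix_mul_assoc)
  also have "\<dots> = A"
    using U d by (simp add: orthogonal_matrix diag_mat_mult_diag_mat A)
  finally have "Y ** Y = A" .
  moreover have "psd Y" unfolding Y_def using d by (intro psd_orthogonal_conj_diag_mat) simp
  ultimately show ?thesis by blast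
qed

lemma psd_form_eq_0_imp_eq_0:
  fixes X :: "real^'n^'n"
  assumes "psd X" "x \<bullet> (X *v x) = 0"
  shows "X *v x = 0"
  using symmetric_form_zero_imp_orthogonal[OF psd_transpose subspace_UNIV, of X x "X *v x"]
    assms psd_inner_nonneg[OF assms(1)] by simp

lemma psd_sqrt_unique:
  fixes X Y :: "real^'n^'n"
  assumes X: "psd X" and Y: "psd Y" and XY: "X ** X = Y ** Y"
  shows "X = Y"
proof -
  define D where "D = X - Y"
  have symD: "transpose D = D" using X Y by (simp add: D_def psd_transpose transpose_diff)
  obtain U mu where U: "orthogonal_matrix U" and DU: "D = U ** diag_mat mu ** transpose U"
    using symmetric_matrix_diagonalization[OF symD] .
  have "mu j = 0" for j
  proof (rule ccontr)
    assume "mu j \<noteq> 0"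
    let ?v = "column j U"
    have Dv: "D *v ?v = mu j *\<^sub>R ?v" using orthogonal_conj_diag_mat_column[OF U] by (simp add: DU)
    have "X ** D + D ** Y = 0" using XY by (simp add: D_def matrix_diff_ldistrib matrix_diff_rdistrib)
    then have "0 = ?v \<bullet> (X *v (D *v ?v)) + (D *v ?v) \<bullet> (Y *v ?v)"
      by (metis symmetric_inner_mult_vector[OF symD] inner_add_right inner_zero_right
          matrix_vector_mult_0 matrix_vector_mult_add_rdistrib matrix_vector_mul_assoc)
    also have "\<dots> = mu j * (?v \<bullet> (X *v ?v) + ?v \<bullet> (Y *v ?v))"
      by (simp add: Dv matrix_vector_mult_scaleR algebra_simps)
    finally have "?v \<bullet> (X *v ?v) = 0 \<and> ?v \<bullet> (Y *v ?v) = 0"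
      using \<open>mu j \<noteq> 0\<close> psd_inner_nonneg[OF X, of ?v] psd_inner_nonneg[OF Y, of ?v] by simp
    then have "X *v ?v = 0" "Y *v ?v = 0"
      using psd_form_eq_0_imp_eq_0[OF X] psd_form_eq_0_imp_eq_0[OF Y] by blast+
    then have "D *v ?v = 0" by (simp add: D_def matrix_vector_mult_diff_rdistrib)
    moreover have "norm ?v = 1" using U by (simp add: orthogonal_matrix_orthonormal_columns)
    ultimately show False using Dv \<open>mu j \<noteq> 0\<close> by simp
  qed
  then have "diag_mat mu = 0" by (simp add: vec_eq_iff diag_mat_def)
  then have "D = 0" by (simp add: DU)
  then show ?thesis by (simp add: D_def)
qed

lemma
  fixes S :: "real^'n^'n"
  assumes "psd S"
  shows psd_psd_sqrt: "psd (psd_sqrt S)" and psd_sqrt_mult_self: "psd_sqrt S ** psd_sqrt S = S"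
proof -
  have "\<exists>!X. psd X \<and> X ** X = S"
    using psd_sqrt_exists[OF assms] psd_sqrt_unique by metis
  then have "psd (psd_sqrt S) \<and> psd_sqrt S ** psd_sqrt S = S"
    unfolding psd_sqrt_def by (rule theI')
  then show "psd (psd_sqrt S)" "psd_sqrt S ** psd_sqrt S = S" by auto
qed

lemma psd_diag_nonneg: "psd P \<Longrightarrow> 0 \<le> P $ i $ i"
  by (simp add: matrix_component_eq_inner psd_inner_nonneg)

lemma psd_trace_nonneg: "psd P \<Longrightarrow> 0 \<le> trace P"
  unfolding trace_def by (intro sum_nonneg psd_diag_nonneg)

lemma trace_mult_psd_nonneg:
  fixes P Q :: "real^'n^'n"
  assumes "psd P" "psd Q"
  shows "0 \<le> trace (P ** Q)"
proof -
  let ?Y = "psd_sqrt Q"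
  have "trace (P ** Q) = trace ((P ** ?Y) ** ?Y)"
    using psd_sqrt_mult_self[OF assms(2)] by (simp add: matrix_mul_assoc[symmetric])
  also have "\<dots> = trace (?Y ** (P ** ?Y))"
    by (rule trace_mul_sym)
  also have "\<dots> = trace (transpose ?Y ** P ** ?Y)"
    by (simp add: psd_transpose[OF psd_psd_sqrt[OF assms(2)]] matrix_mul_assoc)
  also have "\<dots> \<ge> 0" by (intro psd_trace_nonneg psd_congruence assms(1))
  finally show ?thesis .
qed

lemma psd_abs_entry_le:
  fixes P :: "real^'n^'n"
  assumes "psd P"
  shows "2 * \<bar>P $ i $ j\<bar> \<le> P $ i $ i + P $ j $ j"
proof -
  let ?a = "axis i 1 :: real^'n" and ?b = "axis j 1 :: real^'n"
  have "P $ j $ i = P $ i $ j"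
    using psd_transpose[OF assms] unfolding transpose_def by (metis vec_lambda_beta)
  moreover have "(?a + s *\<^sub>R ?b) \<bullet> (P *v (?a + s *\<^sub>R ?b))
      = ?a \<bullet> (P *v ?a) + s * (?a \<bullet> (P *v ?b)) + s * (?b \<bullet> (P *v ?a)) + s\<^sup>2 * (?b \<bullet> (P *v ?b))"
    for s
    by (simp only: matrix_vector_right_distrib matrix_vector_mult_scaleR inner_add_left
        inner_add_right inner_scaleR_left inner_scaleR_right) (simp add: algebra_simps power2_eq_square)
  ultimately have "0 \<le> P $ i $ i + 2 * s * P $ i $ j + s\<^sup>2 * P $ j $ j" for s
    using psd_inner_nonneg[OF assms, of "?a + s *\<^sub>R ?b"]
    by (simp only: matrix_component_eq_inner[symmetric])
  from this[of 1] this[of "-1"] show ?thesis by (simp add: abs_if)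
qed

lemma psd_norm_le_trace:
  fixes P :: "real^'n^'n"
  assumes "psd P"
  shows "norm P \<le> CARD('n) * trace P"
proof -
  have "norm P \<le> (\<Sum>i\<in>UNIV. norm (P $ i))"
    unfolding norm_vec_def by (rule L2_set_le_sum) simp
  also have "\<dots> \<le> (\<Sum>i\<in>UNIV. \<Sum>j\<in>UNIV. (P $ i $ i + P $ j $ j) / 2)"
    using psd_abs_entry_le[OF assms] norm_le_l1_cart
    by (intro sum_mono order_trans[OF norm_le_l1_cart]) (simp add: field_simps)
  also have "\<dots> = CARD('n) * trace P"
    by (simp add: trace_def sum.distrib sum_divide_distrib[symmetric] sum_distrib_left
        mult.commute)
  finally show ?thesis .
qed

lemma one_add_sum_le_prod_one_add:
  fixes d :: "'a \<Rightarrow> real"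
  assumes "finite I" "\<And>i. i \<in> I \<Longrightarrow> 0 \<le> d i"
  shows "1 + sum d I \<le> (\<Prod>i\<in>I. 1 + d i)"
  using assms
proof (induction I rule: finite_induct)
  case (insert a I)
  then have "1 + sum d (insert a I) \<le> (1 + d a) * (1 + sum d I)"
    by (simp add: algebra_simps sum_nonneg)
  also have "\<dots> \<le> (1 + d a) * (\<Prod>i\<in>I. 1 + d i)"
    using insert by (intro mult_left_mono) auto
  finally show ?case using insert by simp
qed simp

lemma det_orthogonal_conj:
  fixes U M :: "real^'n^'n"
  assumes "orthogonal_matrix U"
  shows "det (U ** M ** transpose U) = det M"
  using assms det_mul[of U "transpose U"] by (simp add: det_mul orthogonal_matrix_def)

lemma trace_orthogonal_conj:
  fixes U M :: "real^'n^'n"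
  assumes "orthogonal_matrix U"
  shows "trace (U ** M ** transpose U) = trace M"
  using assms trace_mul_sym[of "U ** M" "transpose U"]
  by (simp add: orthogonal_matrix matrix_mul_assoc)

lemma det_mat_1_add_psd_ge:
  fixes Z :: "real^'n^'n"
  assumes "psd Z"
  shows "1 + trace Z \<le> det (mat 1 + Z)"
proof -
  obtain U d where U: "orthogonal_matrix U" and d: "\<And>j. 0 \<le> d j"
    and Z: "Z = U ** diag_mat d ** transpose U"
    using psd_diagonalization[OF assms] by blast
  have "mat 1 = U ** diag_mat (\<lambda>_. 1) ** transpose U"
    using U by (simp add: orthogonal_matrix_def mat_eq_diag_mat[symmetric])
  then have "mat 1 + Z = U ** (diag_mat (\<lambda>_. 1) + diag_mat d) ** transpose U"
    by (simp add: Z matrix_add_ldistrib matrix_add_rdistrib)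
  also have "\<dots> = U ** diag_mat (\<lambda>i. 1 + d i) ** transpose U"
    by (simp add: diag_mat_add)
  finally have "mat 1 + Z = U ** diag_mat (\<lambda>i. 1 + d i) ** transpose U" .
  then show ?thesis
    using U d one_add_sum_le_prod_one_add[of UNIV d]
    by (simp add: Z det_orthogonal_conj trace_orthogonal_conj det_diag_mat trace_diag_mat)
qed

section \<open>Positive definite matrices and inverses\<close>

lemma posdef_invertible:
  fixes W :: "real^'n^'n"
  assumes "posdef W"
  shows "invertible W"
proof -
  have "inj ((*v) W)"
  proof (rule injI)
    fix x y assume "W *v x = W *v y"
    then have "(x - y) \<bullet> (W *v (x - y)) = 0" by (simp add: matrix_vector_mult_diff_distrib)
    then show "x = y" using assms unfolding posdef_def by (metis less_irrefl right_minus_eq)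
  qed
  then show ?thesis by (meson invertible_left_inverse matrix_left_invertible_injective)
qed

lemma
  fixes W :: "real^'n^'n"
  assumes "invertible W"
  shows matrix_inv_right: "W ** matrix_inv W = mat 1" and matrix_inv_left: "matrix_inv W ** W = mat 1"
  using someI_ex[OF assms[unfolded invertible_def]] by (simp_all add: matrix_inv_def)

lemma transpose_matrix_inv_symmetric:
  fixes W :: "real^'n^'n"
  assumes "invertible W" "transpose W = W"
  shows "transpose (matrix_inv W) = matrix_inv W"
proof -
  let ?Wi = "matrix_inv W"
  have TW: "transpose ?Wi ** W = mat 1"
    using arg_cong[OF matrix_inv_right[OF assms(1)], of transpose] assms(2)
    by (simp add: matrix_transpose_mul)
  have "transpose ?Wi = transpose ?Wi ** (W ** ?Wi)" by (simp add: matrix_inv_right[OF assms(1)])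
  also have "\<dots> = ?Wi" by (simp only: matrix_mul_assoc TW matrix_mul_lid)
  finally show ?thesis .
qed

lemma posdef_lower_bound:
  fixes R :: "real^'n^'n"
  assumes "posdef R"
  shows "\<exists>c>0. \<forall>x. c * (x \<bullet> x) \<le> x \<bullet> (R *v x)"
proof -
  let ?f = "\<lambda>x. x \<bullet> (R *v x)"
  have "continuous_on (sphere 0 1) ?f"
    by (intro continuous_intros linear_continuous_on matrix_vector_mul_bounded_linear)
  moreover have "axis undefined 1 \<in> sphere (0::real^'n) 1" by simp
  ultimately obtain x0 where x0: "x0 \<in> sphere 0 1" and min: "\<And>y. y \<in> sphere 0 1 \<Longrightarrow> ?f x0 \<le> ?f y"
    using continuous_attains_inf[OF compact_sphere] by blast
  have "x0 \<noteq> 0" using x0 by auto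
  then have "0 < ?f x0" using assms by (simp add: posdef_def)
  moreover have "?f x0 * (x \<bullet> x) \<le> ?f x" for x
  proof (cases "x = 0")
    case False
    then have "?f x0 \<le> ?f (x /\<^sub>R norm x)" by (intro min) simp
    moreover have "?f (x /\<^sub>R norm x) = ?f x / (norm x)\<^sup>2"
      using inner_mult_vector_scaleR[of "inverse (norm x)" x R]
      by (simp add: power_inverse divide_inverse_commute)
    ultimately have "?f x0 \<le> ?f x / (norm x)\<^sup>2" by simp
    then show ?thesis using False by (simp add: le_divide_eq dot_square_norm)
  qed simp
  ultimately show ?thesis by blast
qed

lemma posdef_family_lower_bound:
  fixes R :: "'a \<Rightarrow> real^'n^'n"
  assumes "finite I" "\<And>i. i \<in> I \<Longrightarrow> posdef (R i)"
  shows "\<exists>c>0. \<forall>i\<in>I. \<forall>x. c * (x \<bullet> x) \<le> x \<bullet> (R i *v x)"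
  using assms
proof (induction I rule: finite_induct)
  case (insert a I)
  have "\<And>i. i \<in> I \<Longrightarrow> posdef (R i)" using insert.prems by simp
  then obtain c1 where c1: "c1 > 0" "\<forall>i\<in>I. \<forall>x. c1 * (x \<bullet> x) \<le> x \<bullet> (R i *v x)"
    using insert.IH by blast
  obtain c2 where c2: "c2 > 0" "\<forall>x. c2 * (x \<bullet> x) \<le> x \<bullet> (R a *v x)"
    using posdef_lower_bound[OF insert.prems[OF insertI1]] by blast
  have "min c1 c2 * (x \<bullet> x) \<le> x \<bullet> (R i *v x)" if "i \<in> insert a I" for i x
  proof -
    have "min c1 c2 * (x \<bullet> x) \<le> c1 * (x \<bullet> x)" "min c1 c2 * (x \<bullet> x) \<le> c2 * (x \<bullet> x)"
      by (simp_all add: mult_right_mono)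
    moreover have "c1 * (x \<bullet> x) \<le> x \<bullet> (R i *v x) \<or> c2 * (x \<bullet> x) \<le> x \<bullet> (R i *v x)"
      using that c1(2) c2(2) by auto
    ultimately show ?thesis by linarith
  qed
  then show ?case using c1 c2 by (intro exI[of _ "min c1 c2"]) auto
qed (auto intro: exI[of _ 1])

lemma trace_mult_ge_lower_bound:
  fixes N S :: "real^'n^'n"
  assumes S: "psd S" and N: "transpose N = N" and lb: "\<And>x. c * (x \<bullet> x) \<le> x \<bullet> (N *v x)"
  shows "c * trace S \<le> trace (N ** S)"
proof -
  have "psd (N - c *\<^sub>R mat 1)"
    using lb N by (simp add: psd_def transpose_diff transpose_scalar matrix_vector_mult_diff_rdistrib
        inner_diff_right scaleR_matrix_vector_assoc[symmetric])
  then have "0 \<le> trace ((N - c *\<^sub>R mat 1) ** S)" using trace_mult_psd_nonneg S by blast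
  then show ?thesis
    by (simp add: matrix_diff_rdistrib trace_sub scalar_matrix_assoc[symmetric] trace_scaleR)
qed

lemma det_divide_eq_det_mult_inverse:
  fixes X W W' :: "real^'n^'n"
  assumes "W ** W' = mat 1"
  shows "det X / det W = det (X ** W')"
proof -
  have W: "det W * det W' = 1" using assms by (metis det_I det_mul)
  then have "det W \<noteq> 0" by auto
  with W have "det W' = 1 / det W" by (simp add: field_simps)
  then show ?thesis by (simp add: det_mul)
qed

lemma det_mat_1_add_mult_commute:
  fixes X Y :: "real^'n^'n"
  assumes "invertible Y"
  shows "det (mat 1 + X ** Y) = det (mat 1 + Y ** X)"
proof -
  have "Y ** (mat 1 + X ** Y) = (mat 1 + Y ** X) ** Y"
    by (simp add: matrix_add_ldistrib matrix_add_rdistrib matrix_mul_assoc)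
  then have "det Y * det (mat 1 + X ** Y) = det Y * det (mat 1 + Y ** X)"
    by (metis det_mul mult.commute)
  then show ?thesis using assms by (simp add: invertible_det_nz)
qed

text \<open>With \<open>Y = psd_sqrt N\<close> the ratio equals \<open>det (I + Y S Y / eps)\<close>.\<close>
lemma det_ratio_ge_one_add_trace:
  fixes N S :: "real^'m^'m"
  assumes eps: "eps > 0" and S: "psd S" and N: "transpose N = N" and c: "c > 0"
    and lb: "\<And>x. c * (x \<bullet> x) \<le> x \<bullet> (N *v x)"
  shows "1 + c * trace S / eps \<le> det (S + eps *\<^sub>R matrix_inv N) / det (eps *\<^sub>R matrix_inv N)"
proof -
  have "0 < x \<bullet> (N *v x)" if "x \<noteq> 0" for x
  proof -
    have "0 < c * (x \<bullet> x)" using c that by simp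
    then show ?thesis using lb[of x] by linarith
  qed
  then have Npd: "posdef N" using N by (simp add: posdef_def)
  let ?Y = "psd_sqrt N"
  have Y: "psd ?Y" "?Y ** ?Y = N"
    using psd_psd_sqrt psd_sqrt_mult_self posdef_imp_psd[OF Npd] by auto
  have "det ?Y * det ?Y \<noteq> 0"
    using posdef_invertible[OF Npd] Y(2) by (metis det_mul invertible_det_nz)
  then have invY: "invertible ?Y" by (simp add: invertible_det_nz)
  have inv: "(eps *\<^sub>R matrix_inv N) ** ((1/eps) *\<^sub>R N) = mat 1"
    using eps matrix_inv_left[OF posdef_invertible[OF Npd]]
    by (simp add: matrix_scalar_ac scalar_matrix_assoc[symmetric])
  have "S ** ((1/eps) *\<^sub>R N) = ((1/eps) *\<^sub>R S ** ?Y) ** ?Y"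
    by (simp add: Y(2) matrix_mul_assoc[symmetric] matrix_scalar_ac scalar_matrix_assoc[symmetric])
  then have prod: "(S + eps *\<^sub>R matrix_inv N) ** ((1/eps) *\<^sub>R N) = mat 1 + ((1/eps) *\<^sub>R S ** ?Y) ** ?Y"
    by (simp add: matrix_add_rdistrib inv add.commute)
  have "det (S + eps *\<^sub>R matrix_inv N) / det (eps *\<^sub>R matrix_inv N)
      = det (mat 1 + ((1/eps) *\<^sub>R S ** ?Y) ** ?Y)"
    unfolding det_divide_eq_det_mult_inverse[OF inv] prod ..
  also have "\<dots> = det (mat 1 + ?Y ** ((1/eps) *\<^sub>R S ** ?Y))"
    by (rule det_mat_1_add_mult_commute[OF invY])
  also have "?Y ** ((1/eps) *\<^sub>R S ** ?Y) = (1/eps) *\<^sub>R (transpose ?Y ** S ** ?Y)"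
    by (simp add: psd_transpose[OF Y(1)] matrix_mul_assoc matrix_scalar_ac
        scalar_matrix_assoc[symmetric])
  finally have ratio: "det (S + eps *\<^sub>R matrix_inv N) / det (eps *\<^sub>R matrix_inv N)
      = det (mat 1 + (1/eps) *\<^sub>R (transpose ?Y ** S ** ?Y))" .
  have "trace (transpose ?Y ** S ** ?Y) = trace (?Y ** (?Y ** S))"
    using trace_mul_sym[of "?Y ** S" ?Y] by (simp add: psd_transpose[OF Y(1)])
  also have "\<dots> \<ge> c * trace S"
    using trace_mult_ge_lower_bound[OF S N lb] by (simp add: matrix_mul_assoc Y(2))
  finally have "c * trace S / eps \<le> trace ((1/eps) *\<^sub>R (transpose ?Y ** S ** ?Y))"
    using eps by (simp add: trace_scaleR divide_right_mono)
  moreover have "1 + trace ((1/eps) *\<^sub>R (transpose ?Y ** S ** ?Y))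
      \<le> det (mat 1 + (1/eps) *\<^sub>R (transpose ?Y ** S ** ?Y))"
    using eps by (intro det_mat_1_add_psd_ge psd_scaleR psd_congruence S) simp
  ultimately show ?thesis using ratio by linarith
qed

section \<open>The Riccati recursion and the cost\<close>

text \<open>With \<open>z = W\<^sup>-\<^sup>1 S B\<^sup>T P x\<close> and \<open>w = B S z\<close>, the form of the matrix below at \<open>x\<close> is
  \<open>(x - w/eps) \<bullet> P (x - w/eps) + (z \<bullet> z + S z \<bullet> R S z / eps) / eps\<close>.\<close>
lemma riccati_difference_psd:
  fixes P :: "real^'n^'n" and B :: "real^'m^'n" and R S :: "real^'m^'m"
  assumes eps: "eps > 0" and P: "psd P" and R: "psd R" and S: "transpose S = S"
  defines "W \<equiv> mat 1 + S ** ((1/eps) *\<^sub>R (R + transpose B ** P ** B)) ** S"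
  shows "psd (P - (1/eps) *\<^sub>R (P ** B ** S ** matrix_inv W ** S ** transpose B ** P))"
proof -
  have SCS: "psd (S ** ((1/eps) *\<^sub>R (R + transpose B ** P ** B)) ** S)"
    using psd_congruence[OF psd_scaleR[OF psd_add[OF R psd_congruence[OF P]]], of "1/eps" S] eps S
    by simp
  have "0 < x \<bullet> (W *v x)" if "x \<noteq> 0" for x
    using psd_inner_nonneg[OF SCS, of x] that
    by (simp add: W_def matrix_vector_mult_add_rdistrib inner_add_right add_pos_nonneg)
  moreover have WT: "transpose W = W"
    using SCS by (simp add: W_def transpose_add psd_transpose)
  ultimately have invW: "invertible W" by (simp add: posdef_def posdef_invertible)
  define M where "M = P - (1/eps) *\<^sub>R (P ** B ** S ** matrix_inv W ** S ** transpose B ** P)"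
  have PT: "transpose P = P" by (rule psd_transpose[OF P])
  have "transpose M = M"
    by (simp add: M_def transpose_diff transpose_scalar matrix_transpose_mul PT S
        transpose_matrix_inv_symmetric[OF invW WT] matrix_mul_assoc)
  moreover have "0 \<le> x \<bullet> (M *v x)" for x
  proof -
    define z where "z = matrix_inv W *v (S *v (transpose B *v (P *v x)))"
    define y where "y = S *v z"
    define w where "w = B *v y"
    define a where "a = x \<bullet> (P *v x)"
    define b where "b = w \<bullet> (P *v x)"
    define c where "c = w \<bullet> (P *v w)"
    define q where "q = z \<bullet> z + (1/eps) * (y \<bullet> (R *v y))"
    have xMx: "x \<bullet> (M *v x) = a - (1/eps) * b"
    proof -
      have "(P ** B ** S ** matrix_inv W ** S ** transpose B ** P) *v x = P *v w"
        by (simp only: w_def y_def z_def matrix_vector_mul_assoc matrix_mul_assoc)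
      then show ?thesis
        by (simp add: M_def a_def b_def matrix_vector_mult_diff_rdistrib inner_diff_right
            scaleR_matrix_vector_assoc[symmetric] symmetric_inner_mult_vector[OF PT, of x w]
            inner_commute)
    qed
    have bq: "b = q + (1/eps) * c"
    proof -
      let ?C = "(1/eps) *\<^sub>R (R + transpose B ** P ** B)"
      have "W *v z = S *v (transpose B *v (P *v x))"
        by (simp only: z_def matrix_vector_mul_assoc[of W "matrix_inv W"] matrix_inv_right[OF invW]
            matrix_vector_mul_lid)
      moreover have "W *v z = z + S *v (?C *v y)"
        by (simp only: W_def y_def matrix_vector_mult_add_rdistrib matrix_vector_mul_lid
            matrix_vector_mul_assoc matrix_mul_assoc)
      ultimately have "z \<bullet> (S *v (transpose B *v (P *v x))) = z \<bullet> (z + S *v (?C *v y))"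
        by (simp only:)
      also have "\<dots> = z \<bullet> z + y \<bullet> (?C *v y)"
        by (simp only: inner_add_right y_def symmetric_inner_mult_vector[OF S])
      finally have "z \<bullet> (S *v (transpose B *v (P *v x))) = z \<bullet> z + y \<bullet> (?C *v y)" .
      moreover have "b = z \<bullet> (S *v (transpose B *v (P *v x)))"
        by (simp only: b_def w_def y_def inner_mult_transpose_vector symmetric_inner_mult_vector[OF S])
      moreover have "y \<bullet> (?C *v y) = (1/eps) * (y \<bullet> (R *v y) + c)"
        by (simp only: c_def w_def scaleR_matrix_vector_assoc[symmetric] inner_scaleR_right
            matrix_vector_mult_add_rdistrib inner_add_right matrix_vector_mul_assoc[symmetric]
            inner_mult_transpose_vector)
      ultimately show ?thesis by (simp add: q_def algebra_simps)
    qed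
    have uPu: "(x - (1/eps) *\<^sub>R w) \<bullet> (P *v (x - (1/eps) *\<^sub>R w))
        = a - 2 * (1/eps) * b + (1/eps)\<^sup>2 * c"
    proof -
      have "x \<bullet> (P *v w) = b"
        using symmetric_inner_mult_vector[OF PT, of x w] by (simp only: b_def inner_commute)
      then show ?thesis
        by (simp only: a_def[symmetric] b_def[symmetric] c_def[symmetric] inner_scaleR_left
            inner_scaleR_right matrix_vector_mult_diff_distrib matrix_vector_mult_scaleR
            inner_diff_left inner_diff_right) (simp add: power2_eq_square right_diff_distrib)
    qed
    have "x \<bullet> (M *v x) = (x - (1/eps) *\<^sub>R w) \<bullet> (P *v (x - (1/eps) *\<^sub>R w)) + (1/eps) * q"
      unfolding xMx uPu bq by (simp add: power2_eq_square algebra_simps add_divide_distrib)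
    moreover have "0 \<le> q"
      using psd_inner_nonneg[OF R, of y] eps by (simp add: q_def)
    ultimately show ?thesis using psd_inner_nonneg[OF P, of "x - (1/eps) *\<^sub>R w"] eps by simp
  qed
  ultimately show ?thesis by (simp add: psd_def M_def)
qed

lemma Pi_step_psd:
  fixes P Ak :: "real^'n^'n" and Bk :: "real^'m^'n" and Rk Srho :: "real^'m^'m"
  assumes "eps > 0" "psd P" "psd Rk" "psd Srho"
  shows "psd (Pi_step eps Ak Bk Rk Srho P)"
proof -
  let ?S = "psd_sqrt Srho"
  let ?W = "mat 1 + ?S ** ((1/eps) *\<^sub>R (Rk + transpose Bk ** P ** Bk)) ** ?S"
  have "Pi_step eps Ak Bk Rk Srho P = transpose Ak
      ** (P - (1/eps) *\<^sub>R (P ** Bk ** ?S ** matrix_inv ?W ** ?S ** transpose Bk ** P)) ** Ak"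
    unfolding Pi_step_def Let_def
    by (simp add: matrix_diff_ldistrib matrix_diff_rdistrib matrix_scalar_ac
        scalar_matrix_assoc[symmetric] matrix_mul_assoc)
  moreover have "psd (P - (1/eps) *\<^sub>R (P ** Bk ** ?S ** matrix_inv ?W ** ?S ** transpose Bk ** P))"
    using assms by (intro riccati_difference_psd psd_transpose psd_psd_sqrt)
  ultimately show ?thesis by (simp add: psd_congruence)
qed

lemma Pi_mat_psd:
  assumes "T \<ge> 1" "eps > 0" "\<And>k. k < T \<Longrightarrow> psd (R k)" "\<And>k. k < T \<Longrightarrow> psd (Srho k)"
    "psd F"
  shows "psd (Pi_mat T eps A B R F Srho k)"
proof -
  (* T - Suc j truncates to 0 once j \<ge> T, so T \<ge> 1 keeps every index used below T. *)
  have "psd (Pi_aux T eps A B R F Srho j)" for j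
    by (induction j) (use assms in \<open>simp_all add: Pi_step_psd\<close>)
  then show ?thesis by (simp add: Pi_mat_def)
qed

lemma ln_det_ratio_ge:
  assumes T: "T \<ge> 1" and eps: "eps > 0" and R: "\<And>k. k < T \<Longrightarrow> psd (R k)"
    and Srho: "\<And>k. k < T \<Longrightarrow> psd (Srho k)" and F: "psd F" and k: "k < T"
    and c: "c > 0" and lb: "\<And>x. c * (x \<bullet> x) \<le> x \<bullet> (R k *v x)"
  shows "ln (1 + c * trace (Srho k) / eps)
      \<le> ln (det (Srho k + Sigma_Q T eps A B R F Srho k) / det (Sigma_Q T eps A B R F Srho k))"
proof -
  let ?P = "Pi_mat T eps A B R F Srho (Suc k)"
  let ?N = "R k + transpose (B k) ** ?P ** B k"
  have P: "psd ?P" by (rule Pi_mat_psd[OF T eps R Srho F])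
  have "psd ?N" by (intro psd_add R k psd_congruence P)
  moreover have "c * (x \<bullet> x) \<le> x \<bullet> (?N *v x)" for x
    using lb[of x] psd_inner_nonneg[OF psd_congruence[OF P], of x "B k"]
    by (simp add: matrix_vector_mult_add_rdistrib inner_add_right)
  ultimately have "1 + c * trace (Srho k) / eps
      \<le> det (Srho k + Sigma_Q T eps A B R F Srho k) / det (Sigma_Q T eps A B R F Srho k)"
    unfolding Sigma_Q_def
    by (intro det_ratio_ge_one_add_trace eps Srho k c) (simp_all add: psd_transpose)
  moreover have "0 < 1 + c * trace (Srho k) / eps"
    using psd_trace_nonneg[OF Srho[OF k]] c eps by (simp add: add_pos_nonneg)
  ultimately show ?thesis by simp
qed

lemma J_check_ge_ln_trace:
  assumes T: "T \<ge> 1" and eps: "eps > 0" and R: "\<And>k. k < T \<Longrightarrow> psd (R k)"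
    and Sw: "\<And>k. k < T \<Longrightarrow> psd (Sw k)" and F: "psd F" and Sx: "psd Sx"
    and Srho: "\<And>k. k < T \<Longrightarrow> psd (Srho k)"
    and c: "c > 0" and lb: "\<And>k x. k < T \<Longrightarrow> c * (x \<bullet> x) \<le> x \<bullet> (R k *v x)"
    and k: "k < T"
  shows "eps / 2 * ln (1 + c * trace (Srho k) / eps) \<le> J_check T eps A B R Sw F Sx Srho"
proof -
  let ?P = "Pi_mat T eps A B R F Srho" and ?Q = "Sigma_Q T eps A B R F Srho"
  define L where "L j = eps * ln (det (Srho j + ?Q j) / det (?Q j)) + trace (?P (Suc j) ** Sw j)"
    for j
  have P: "psd (?P j)" for j by (rule Pi_mat_psd[OF T eps R Srho F])
  have L: "eps * ln (1 + c * trace (Srho j) / eps) \<le> L j" if "j < T" for j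
  proof -
    have "eps * ln (1 + c * trace (Srho j) / eps) \<le> eps * ln (det (Srho j + ?Q j) / det (?Q j))"
      using ln_det_ratio_ge[where R = R and k = j and A = A and B = B, OF T eps R Srho F that c
          lb[OF that]] eps by (simp add: mult_left_mono)
    then show ?thesis
      using trace_mult_psd_nonneg[OF P[of "Suc j"] Sw[OF that]] unfolding L_def by linarith
  qed
  have "0 \<le> L j" if "j < T" for j
  proof -
    have "0 \<le> c * trace (Srho j) / eps" using psd_trace_nonneg[OF Srho[OF that]] c eps by simp
    then have "0 \<le> eps * ln (1 + c * trace (Srho j) / eps)" using eps by simp
    then show ?thesis using L[OF that] by linarith
  qed
  then have "L k \<le> sum L {..<T}"
    using k by (intro member_le_sum) auto
  moreover have "J_check T eps A B R Sw F Sx Srho = (trace (?P 0 ** Sx) + sum L {..<T}) / 2"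
    by (simp add: J_check_def L_def)
  ultimately show ?thesis
    using L[OF k] trace_mult_psd_nonneg[OF P[of 0] Sx] by simp
qed

theorem lemma4:
  fixes T :: nat and eps :: real
    and A :: "nat \<Rightarrow> real^'n^'n" and B :: "nat \<Rightarrow> real^'m^'n"
    and R :: "nat \<Rightarrow> real^'m^'m" and Sw :: "nat \<Rightarrow> real^'n^'n"
    and F Sx :: "real^'n^'n"
  assumes "T \<ge> 1" and "eps > 0"
    and "\<And>k. k < T \<Longrightarrow> posdef (R k)"
    and "\<And>k. k < T \<Longrightarrow> posdef (Sw k)"
    and "posdef F" and "posdef Sx"
  shows "\<forall>M. \<exists>r. \<forall>Srho :: nat \<Rightarrow> real^'m^'m.
           (\<forall>k<T. psd (Srho k)) \<longrightarrow> (\<exists>k<T. norm (Srho k) \<ge> r) \<longrightarrow>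
           J_check T eps A B R Sw F Sx Srho \<ge> M"
proof
  fix M :: real
  obtain c where c: "c > 0" and lb: "\<And>k x. k < T \<Longrightarrow> c * (x \<bullet> x) \<le> x \<bullet> (R k *v x)"
    using posdef_family_lower_bound[of "{..<T}" R] assms(3) by auto
  define r where "r = CARD('m) * (eps / c * (exp (2 * max M 0 / eps) - 1))"
  show "\<exists>r. \<forall>Srho :: nat \<Rightarrow> real^'m^'m. (\<forall>k<T. psd (Srho k)) \<longrightarrow>
          (\<exists>k<T. norm (Srho k) \<ge> r) \<longrightarrow> J_check T eps A B R Sw F Sx Srho \<ge> M"
  proof (intro exI[of _ r] allI impI)
    fix Srho :: "nat \<Rightarrow> real^'m^'m"
    assume Srho: "\<forall>k<T. psd (Srho k)" and "\<exists>k<T. norm (Srho k) \<ge> r"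
    then obtain k where k: "k < T" "r \<le> norm (Srho k)" by blast
    then have "r \<le> CARD('m) * trace (Srho k)" using psd_norm_le_trace Srho by fastforce
    then have "eps / c * (exp (2 * max M 0 / eps) - 1) \<le> trace (Srho k)"
      unfolding r_def by (metis mult_le_cancel_left_pos of_nat_0_less_iff zero_less_card_finite)
    then have "exp (2 * max M 0 / eps) \<le> 1 + c * trace (Srho k) / eps"
      using c \<open>eps > 0\<close> by (simp add: field_simps)
    then have "2 * max M 0 / eps \<le> ln (1 + c * trace (Srho k) / eps)"
      by (metis exp_gt_zero exp_le_cancel_iff exp_ln less_le_trans)
    then have "M \<le> eps / 2 * ln (1 + c * trace (Srho k) / eps)"
      using \<open>eps > 0\<close> by (simp add: field_simps)
    also have "\<dots> \<le> J_check T eps A B R Sw F Sx Srho"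
      using assms Srho c lb k by (intro J_check_ge_ln_trace) (simp_all add: posdef_imp_psd)
    finally show "M \<le> J_check T eps A B R Sw F Sx Srho" .
  qed
qed

end
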